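(* Let $(X,f)$ be the CCS dialgebra and $(X,g)$ the CCS coalgebra (see context), and let $\mathsf{F}(X)=X+(X\times X)$, $\mathsf{B}=\mathcal{P}$, $\mathsf{T}(X)=\mathcal{P}(L\times X)$, $\mathsf{Id}$ the identity functor. Let $E$ be the subcategory of epimorphisms of $\mathit{Dialg}(\mathsf{F},\mathsf{B})$ and $E'$ that of $\mathit{Dialg}(\mathsf{Id},\mathsf{T})$. Let $\mathcal{R}_{(X,f)}=(X,f)/E$ (the whole coslice), and let $\mathcal{R}_{(X,g)}$ be the full subcategory of $(X,g)/E'$ whose objects are those epimorphisms $h$ out of $(X,g)$ such that for all processes $x,x',y,y'$, $h(x)=h(x')$ and $h(y)=h(y')$ imply $h(x\parallel y)=h(x'\parallel y')$. Then: (1) $\mathcal{R}_{(X,g)}$ satisfies conditions (1) and (2) required of $\mathcal{R}$ in the context; (2) $\mathit{id}_{\mathsf{F}X}$ is an invariant for $(X,g)$ and $\mathcal{R}_{(X,g)}$ from $\overline{\mathsf{F}}$ to $\mathsf{F}\circ\overline{\mathsf{Id}}=\overline{\mathsf{F}}$; (3) $\delta$ is an invariant for $(X,g)$ and $\mathcal{R}_{(X,g)}$ from $\mathsf{F}\circ\overline{\mathsf{T}}$ to $\overline{\mathsf{B}}$; (4) $\lambda$ is an invariant for $(X,f)$ and $\mathcal{R}_{(X,f)}$ from $\overline{\mathsf{Id}}$ to $\mathsf{T}\circ\overline{\mathsf{F}}$; (5) $\mu$ is an invariant for $(X,f)$ and $\mathcal{R}_{(X,f)}$ from $\mathsf{T}\circ\overline{\mathsf{B}}$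 to $\overline{\mathsf{T}}$.
   Context: General notions. For functors $\mathsf{F},\mathsf{B}:\mathbf{Set}\to\mathbf{Set}$, an $(\mathsf{F},\mathsf{B})$-dialgebra is a pair $(X,f)$ with $f:\mathsf{F}X\to\mathsf{B}X$; a homomorphism $h:(X,f)\to(Y,g)$ is a function with $g\circ\mathsf{F}h=\mathsf{B}h\circ f$. A $\mathsf{T}$-coalgebra is an $(\mathsf{Id},\mathsf{T})$-dialgebra. For a dialgebra $(X,f)$ and a subcategory $E$ of epimorphisms of its category, $(X,f)/E$ is the coslice: objects are epimorphisms $h:(X,f)\to(Y,g)$, arrows $h\to h'$ are epimorphisms $k$ with $k\circ h=h'$. A category $\mathcal{R}_{(X,f)}$ is required to be a full subcategory of $(X,f)/E$ with (1) for every object $h$ of $(X,f)/E$ an object $h'$ of $\mathcal{R}_{(X,f)}$ and an arrow $h\to h'$, and (2) $\mathit{id}_{(X,f)}$ an object. For an object $h$, $\hat h:\mathit{id}\to h$ is the arrow given by $h$. For $\mathsf{H}:\mathbf{Set}\to\mathbf{Set}$, the lifting $\overline{\mathsf{H}}:\mathcal{R}_{(X,f)}\to\mathbf{Set}$ is $\overline{\mathsf{H}}(h:(X,f)\to(Y,g))=\mathsf{H}Y$, $\overline{\mathsf{H}}(k)=\mathsf{H}k$; a composite like $\mathsf{T}\circ\overline{\mathsf{F}}$ sends $h$ to $\mathsf{T}\mathsf{F}Y$. For functors $\Phi,\Psi:\mathcal{R}_{(X,f)}\to\mathbf{Set}$, a function $k:\Phi(\mathit{id})\to\Psi(\mathit{id})$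 is an invariant from $\Phi$ to $\Psi$ iff for all $x_1,x_2\in\Phi(\mathit{id})$ and every object $h$, $\Phi\hat h(x_1)=\Phi\hat h(x_2)$ implies $\Psi\hat h(k(x_1))=\Psi\hat h(k(x_2))$. Functors: $\mathsf{F}(X)=X+(X\times X)$, $\mathsf{F}h(x)=h(x)$, $\mathsf{F}h(x,y)=(h(x),h(y))$ (elements written without coproduct tags); $\mathsf{B}(X)=\mathcal{P}(X)$, $\mathsf{B}h(S)=h[S]$; $\mathsf{T}(X)=\mathcal{P}(L\times X)$, $\mathsf{T}h(S)=\{(l,h(x))\mid(l,x)\in S\}$. CCS. Let $\mathcal{C}$ be a countable set of channels. Prefixes: $\alpha::=\tau\mid a\mid\bar a$ ($a\in\mathcal{C}$); $L$ is the set of prefixes. Processes: $P::=\sum_{i\in I}\alpha_i.P_i\mid P_1\parallel P_2\mid(\nu a)P$ with $I$ finite, sums taken up to reordering of summands; $\mathbf{0}$ is the empty sum, $\alpha.P$ a one-summand sum, and $\alpha.P+Q$ denotes a sum having $\alpha.P$ as a summand. $X$ is the set of processes. Free names: $\mathit{fn}(\tau)=\emptyset$, $\mathit{fn}(a)=\mathit{fn}(\bar a)=\{a\}$, $\mathit{fn}(\sum\alpha_i.P_i)=\bigcup_i(\mathit{fn}(\alpha_i)\cup\mathit{fn}(P_i))$, $\mathit{fn}(P\parallel Q)=\mathit{fn}(P)\cup\mathit{fn}(Q)$, $\mathit{fn}((\nu a)P)=\mathit{fn}(P)\setminus\{a\}$. Structural congruence $\equiv$ is the least congruence containing $\alpha$-conversion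 of $a$ in $(\nu a)P$, the commutative monoid laws for $\parallel$ with unit $\mathbf{0}$, and $(\nu a)(P\parallel Q)\equiv((\nu a)P)\parallel Q$ if $a\notin\mathit{fn}(Q)$, $(\nu a)\mathbf{0}\equiv\mathbf{0}$, $(\nu a)(\nu b)P\equiv(\nu b)(\nu a)P$. The CCS LTS is the least relation $P\xrightarrow{\alpha}P'$ closed under: (pre) $\alpha.P+Q\xrightarrow{\alpha}P$; (res) if $a\notin\mathit{fn}(\alpha)$ and $P\xrightarrow{\alpha}P'$ then $(\nu a)P\xrightarrow{\alpha}(\nu a)P'$; (par) if $P\xrightarrow{\alpha}P'$ then $P\parallel Q\xrightarrow{\alpha}P'\parallel Q$; (syn) if $P\xrightarrow{\bar c}P'$ and $Q\xrightarrow{c}Q'$ then $P\parallel Q\xrightarrow{\tau}P'\parallel Q'$; (str) if $P\equiv Q$, $P'\equiv Q'$ and $P\xrightarrow{\alpha}P'$ then $Q\xrightarrow{\alpha}Q'$. The CCS coalgebra is $(X,g)$ with $g(x)=\{(\alpha,y)\mid x\xrightarrow{\alpha}y\}$. The CCS dialgebra is the $(\mathsf{F},\mathsf{B})$-dialgebra $(X,f)$ where $f$ is the least function (writing $P\to R$ for $R\in f(P)$ and $(P,Q)\to R$ for $R\in f(P,Q)$) closed under: (tau) $\tau.P+Q\to P$; (res) $P\to P'$ implies $(\nu a)P\to(\nu a)P'$; (par$_1$) $P\to P'$ implies $P\parallel Q\to P'\parallel Q$; (int) $(P,Q)\to R$ implies $P\parallel Q\to R$; (hid) $(P,Q)\to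 R$ and $a\notin\mathit{fn}(Q)$ imply $((\nu a)P,Q)\to(\nu a)R$; (par$_2$) $(P,Q)\to R$ implies $(P\parallel S,Q)\to S\parallel R$; (syn) $(\bar a.P+S,a.Q+T)\to P\parallel Q$; (sym) $(P,Q)\to R$ implies $(Q,P)\to R$; (str$_1$) $P\to R$, $P\equiv Q$, $R\equiv S$ imply $Q\to S$; (str$_2$) $(P,Q)\to R$, $P\equiv S$, $Q\equiv T$, $R\equiv U$ imply $(S,T)\to U$. The maps: $\delta:\mathsf{F}\mathsf{T}X\to\mathsf{B}X$ with $\delta(p)=\{x\mid(\tau,x)\in p\}$ for $p\in\mathsf{T}X$ and $\delta(p_1,p_2)=\{x\parallel y\mid\exists a\in\mathcal{C}.\,((a,x)\in p_1\wedge(\bar a,y)\in p_2)\vee((\bar a,x)\in p_1\wedge(a,y)\in p_2)\}$; $\lambda:X\to\mathsf{T}\mathsf{F}X$ with $\lambda(x)=\{(\tau,x)\}\cup\{(a,(x,\bar a.\mathbf{0}))\mid a\in\mathcal{C}\}\cup\{(\bar a,(x,a.\mathbf{0}))\mid a\in\mathcal{C}\}$; $\mu:\mathsf{T}\mathsf{B}X\to\mathsf{T}X$ with $\mu(q)=\{(l,x)\mid\exists q'.\,(l,q')\in q\wedge x\in q'\}$. *)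

theory Defs
  imports Main "HOL-Library.Multiset" "HOL-Library.Countable"
begin

datatype 'c pre = Tau | In 'c | Out 'c

text \<open>Processes; a guarded sum is a finite multiset of summands (sums up to reordering).\<close>
datatype 'c proc = Sum "('c pre \<times> 'c proc) multiset" | Par "'c proc" "'c proc" | Res 'c "'c proc"

definition nil :: "'c proc" where "nil = Sum {#}"
definition pfx :: "'c pre \<Rightarrow> 'c proc \<Rightarrow> 'c proc" where "pfx a P = Sum {#(a, P)#}"

fun fn_pre :: "'c pre \<Rightarrow> 'c set" where
  "fn_pre Tau = {}" | "fn_pre (In a) = {a}" | "fn_pre (Out a) = {a}"

primrec fn :: "'c proc \<Rightarrow> 'c set" where
  "fn (Sum M) = (\<Union>p \<in> set_mset (image_mset (map_prod id fn) M). fn_pre (fst p) \<union> snd p)"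
| "fn (Par P Q) = fn P \<union> fn Q"
| "fn (Res a P) = fn P - {a}"

text \<open>Name swapping, used to express alpha-conversion of restricted names.\<close>
definition swap_name :: "'c \<Rightarrow> 'c \<Rightarrow> 'c \<Rightarrow> 'c" where
  "swap_name a b c = (if c = a then b else if c = b then a else c)"

fun swap_pre :: "'c \<Rightarrow> 'c \<Rightarrow> 'c pre \<Rightarrow> 'c pre" where
  "swap_pre a b Tau = Tau"
| "swap_pre a b (In c) = In (swap_name a b c)"
| "swap_pre a b (Out c) = Out (swap_name a b c)"

primrec pswap :: "'c \<Rightarrow> 'c \<Rightarrow> 'c proc \<Rightarrow> 'c proc" where
  "pswap a b (Sum M) = Sum (image_mset (map_prod (swap_pre a b) (pswap a b)) M)"
| "pswap a b (Par P Q) = Par (pswap a b P) (pswap a b Q)"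
| "pswap a b (Res c P) = Res (swap_name a b c) (pswap a b P)"

inductive scong :: "'c proc \<Rightarrow> 'c proc \<Rightarrow> bool" (infix "\<equiv>\<^sub>s" 50) where
  refl: "P \<equiv>\<^sub>s P"
| sym: "P \<equiv>\<^sub>s Q \<Longrightarrow> Q \<equiv>\<^sub>s P"
| trans: "P \<equiv>\<^sub>s Q \<Longrightarrow> Q \<equiv>\<^sub>s R \<Longrightarrow> P \<equiv>\<^sub>s R"
| sum_cong: "P \<equiv>\<^sub>s P' \<Longrightarrow> Sum (add_mset (\<alpha>, P) M) \<equiv>\<^sub>s Sum (add_mset (\<alpha>, P') M)"
| par_cong: "P \<equiv>\<^sub>s P' \<Longrightarrow> Q \<equiv>\<^sub>s Q' \<Longrightarrow> Par P Q \<equiv>\<^sub>s Par P' Q'"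
| res_cong: "P \<equiv>\<^sub>s P' \<Longrightarrow> Res a P \<equiv>\<^sub>s Res a P'"
| alpha: "b \<notin> fn (Res a P) \<Longrightarrow> Res a P \<equiv>\<^sub>s Res b (pswap a b P)"
| par_unit: "Par P nil \<equiv>\<^sub>s P"
| par_comm: "Par P Q \<equiv>\<^sub>s Par Q P"
| par_assoc: "Par (Par P Q) R \<equiv>\<^sub>s Par P (Par Q R)"
| scope: "a \<notin> fn Q \<Longrightarrow> Res a (Par P Q) \<equiv>\<^sub>s Par (Res a P) Q"
| res_nil: "Res a nil \<equiv>\<^sub>s nil"
| res_comm: "Res a (Res b P) \<equiv>\<^sub>s Res b (Res a P)"

inductive step :: "'c proc \<Rightarrow> 'c pre \<Rightarrow> 'c proc \<Rightarrow> bool" where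
  pre: "step (Sum (add_mset (\<alpha>, P) M)) \<alpha> P"
| res: "a \<notin> fn_pre \<alpha> \<Longrightarrow> step P \<alpha> P' \<Longrightarrow> step (Res a P) \<alpha> (Res a P')"
| par: "step P \<alpha> P' \<Longrightarrow> step (Par P Q) \<alpha> (Par P' Q)"
| syn: "step P (Out c) P' \<Longrightarrow> step Q (In c) Q' \<Longrightarrow> step (Par P Q) Tau (Par P' Q')"
| str: "P \<equiv>\<^sub>s Q \<Longrightarrow> P' \<equiv>\<^sub>s Q' \<Longrightarrow> step P \<alpha> P' \<Longrightarrow> step Q \<alpha> Q'"

definition ccs_g :: "('c::countable) proc \<Rightarrow> ('c pre \<times> 'c proc) set" where
  "ccs_g P = {(\<alpha>, P'). step P \<alpha> P'}"

inductive tr1 :: "'c proc \<Rightarrow> 'c proc \<Rightarrow> bool"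
  and tr2 :: "'c proc \<Rightarrow> 'c proc \<Rightarrow> 'c proc \<Rightarrow> bool" where
  tau: "tr1 (Sum (add_mset (Tau, P) M)) P"
| res: "tr1 P P' \<Longrightarrow> tr1 (Res a P) (Res a P')"
| par1: "tr1 P P' \<Longrightarrow> tr1 (Par P Q) (Par P' Q)"
| int: "tr2 P Q R \<Longrightarrow> tr1 (Par P Q) R"
| hid: "tr2 P Q R \<Longrightarrow> a \<notin> fn Q \<Longrightarrow> tr2 (Res a P) Q (Res a R)"
| par2: "tr2 P Q R \<Longrightarrow> tr2 (Par P S) Q (Par S R)"
| syn: "tr2 (Sum (add_mset (Out a, P) S)) (Sum (add_mset (In a, Q) T)) (Par P Q)"
| sym: "tr2 P Q R \<Longrightarrow> tr2 Q P R"
| str1: "tr1 P R \<Longrightarrow> P \<equiv>\<^sub>s Q \<Longrightarrow> R \<equiv>\<^sub>s S \<Longrightarrow> tr1 Q S"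
| str2: "tr2 P Q R \<Longrightarrow> P \<equiv>\<^sub>s S \<Longrightarrow> Q \<equiv>\<^sub>s T \<Longrightarrow> R \<equiv>\<^sub>s U \<Longrightarrow> tr2 S T U"

fun ccs_f :: "('c::countable) proc + 'c proc \<times> 'c proc \<Rightarrow> 'c proc set" where
  "ccs_f (Inl P) = {R. tr1 P R}"
| "ccs_f (Inr (P, Q)) = {R. tr2 P Q R}"

definition Fmap :: "('a \<Rightarrow> 'b) \<Rightarrow> 'a + 'a \<times> 'a \<Rightarrow> 'b + 'b \<times> 'b" where
  "Fmap h = map_sum h (map_prod h h)"

definition Fset :: "'a set \<Rightarrow> ('a + 'a \<times> 'a) set" where
  "Fset Y = Inl ` Y \<union> Inr ` (Y \<times> Y)"

definition Bmap :: "('a \<Rightarrow> 'b) \<Rightarrow> 'a set \<Rightarrow> 'b set" where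
  "Bmap h S = h ` S"

definition Tmap :: "('a \<Rightarrow> 'b) \<Rightarrow> ('l \<times> 'a) set \<Rightarrow> ('l \<times> 'b) set" where
  "Tmap h S = (\<lambda>(l, x). (l, h x)) ` S"

definition coalg :: "'y set \<Rightarrow> ('y \<Rightarrow> ('l \<times> 'y) set) \<Rightarrow> bool" where
  "coalg Y g \<longleftrightarrow> (\<forall>y\<in>Y. g y \<subseteq> UNIV \<times> Y)"

definition coalg_hom :: "'x set \<Rightarrow> ('x \<Rightarrow> ('l \<times> 'x) set) \<Rightarrow> 'y set \<Rightarrow> ('y \<Rightarrow> ('l \<times> 'y) set) \<Rightarrow> ('x \<Rightarrow> 'y) \<Rightarrow> bool" where
  "coalg_hom X g Y g' h \<longleftrightarrow> (\<forall>x\<in>X. h x \<in> Y \<and> g' (h x) = Tmap h (g x))"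

text \<open>Epimorphisms of coalgebras over Set, rendered as surjective homomorphisms.\<close>
definition coalg_epi :: "'x set \<Rightarrow> ('x \<Rightarrow> ('l \<times> 'x) set) \<Rightarrow> 'y set \<Rightarrow> ('y \<Rightarrow> ('l \<times> 'y) set) \<Rightarrow> ('x \<Rightarrow> 'y) \<Rightarrow> bool" where
  "coalg_epi X g Y g' h \<longleftrightarrow> coalg_hom X g Y g' h \<and> h ` X = Y"

definition dialg :: "'y set \<Rightarrow> ('y + 'y \<times> 'y \<Rightarrow> 'y set) \<Rightarrow> bool" where
  "dialg Y f \<longleftrightarrow> (\<forall>u\<in>Fset Y. f u \<subseteq> Y)"

definition dialg_hom :: "'x set \<Rightarrow> ('x + 'x \<times> 'x \<Rightarrow> 'x set) \<Rightarrow> 'y set \<Rightarrow> ('y + 'y \<times> 'y \<Rightarrow> 'y set) \<Rightarrow> ('x \<Rightarrow> 'y) \<Rightarrow> bool" where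
  "dialg_hom X f Y f' h \<longleftrightarrow> (\<forall>x\<in>X. h x \<in> Y) \<and> (\<forall>u\<in>Fset X. f' (Fmap h u) = Bmap h (f u))"

definition dialg_epi :: "'x set \<Rightarrow> ('x + 'x \<times> 'x \<Rightarrow> 'x set) \<Rightarrow> 'y set \<Rightarrow> ('y + 'y \<times> 'y \<Rightarrow> 'y set) \<Rightarrow> ('x \<Rightarrow> 'y) \<Rightarrow> bool" where
  "dialg_epi X f Y f' h \<longleftrightarrow> dialg_hom X f Y f' h \<and> h ` X = Y"

definition Rg_obj :: "'y set \<Rightarrow> ('y \<Rightarrow> ('c pre \<times> 'y) set) \<Rightarrow> (('c::countable) proc \<Rightarrow> 'y) \<Rightarrow> bool" where
  "Rg_obj Y g' h \<longleftrightarrow> coalg Y g' \<and> coalg_epi UNIV ccs_g Y g' h \<and>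
     (\<forall>x x' y y'. h x = h x' \<and> h y = h y' \<longrightarrow> h (Par x y) = h (Par x' y'))"

definition Rf_obj :: "'y set \<Rightarrow> ('y + 'y \<times> 'y \<Rightarrow> 'y set) \<Rightarrow> (('c::countable) proc \<Rightarrow> 'y) \<Rightarrow> bool" where
  "Rf_obj Y f' h \<longleftrightarrow> dialg Y f' \<and> dialg_epi UNIV ccs_f Y f' h"

text \<open>Invariants: Phi h and Psi h are the actions of the functors on the arrow hat-h (= h).\<close>
definition invariant :: "(('x \<Rightarrow> 'y) \<Rightarrow> bool) \<Rightarrow> (('x \<Rightarrow> 'y) \<Rightarrow> 'a \<Rightarrow> 'b) \<Rightarrow> (('x \<Rightarrow> 'y) \<Rightarrow> 'c \<Rightarrow> 'd) \<Rightarrow> ('a \<Rightarrow> 'c) \<Rightarrow> bool" where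
  "invariant Obj Phi Psi k \<longleftrightarrow>
     (\<forall>h x1 x2. Obj h \<longrightarrow> Phi h x1 = Phi h x2 \<longrightarrow> Psi h (k x1) = Psi h (k x2))"

fun ccs_delta :: "('c pre \<times> ('c::countable) proc) set + ('c pre \<times> 'c proc) set \<times> ('c pre \<times> 'c proc) set \<Rightarrow> 'c proc set" where
  "ccs_delta (Inl p) = {x. (Tau, x) \<in> p}"
| "ccs_delta (Inr (p1, p2)) = {Par x y | x y. \<exists>a. ((In a, x) \<in> p1 \<and> (Out a, y) \<in> p2) \<or> ((Out a, x) \<in> p1 \<and> (In a, y) \<in> p2)}"

definition ccs_lambda :: "('c::countable) proc \<Rightarrow> ('c pre \<times> ('c proc + 'c proc \<times> 'c proc)) set" where
  "ccs_lambda x = {(Tau, Inl x)} \<union> {(In a, Inr (x, pfx (Out a) nil)) | a. True}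
                  \<union> {(Out a, Inr (x, pfx (In a) nil)) | a. True}"

definition ccs_mu :: "('l \<times> 'a set) set \<Rightarrow> ('l \<times> 'a) set" where
  "ccs_mu q = {(l, x). \<exists>q'. (l, q') \<in> q \<and> x \<in> q'}"

end

theory Submission
  imports Defs
begin

text \<open>
  Parts (2), (4) and (5) hold for arbitrary maps h, not only for the objects of the
  categories R: the identity trivially respects equalities, T(F h) \<circ> \<lambda> depends on x only
  through h x, and \<mu> is natural.  Part (3) only needs that h identifies
  x \<parallel> y and x' \<parallel> y' whenever it identifies x with x' and y with y', which
  is built into the objects of R_(X,g).

  The substance is part (1): every epimorphism h out of the CCS coalgebra factors further,
  k \<circ> h, onto the quotient by strong bisimilarity, and the kernel of that composite is
  bisimilarity.  Hence k \<circ> h respects parallel composition once bisimilarity is shown to be a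
  congruence for it.
\<close>

lemma Tmap_mem: "(l, x) \<in> S \<Longrightarrow> (l, f x) \<in> Tmap f S"
  unfolding Tmap_def by (rule image_eqI[of _ _ "(l, x)"]) auto

lemma Tmap_memE: "(l, y) \<in> Tmap f S \<Longrightarrow> \<exists>x. (l, x) \<in> S \<and> y = f x"
  unfolding Tmap_def by auto

lemma Tmap_comp: "Tmap f (Tmap g S) = Tmap (f \<circ> g) S"
  unfolding Tmap_def image_image by (rule image_cong) (auto split: prod.splits)

lemma Tmap_eq_match:
  "Tmap h p = Tmap h q \<Longrightarrow> (l, x) \<in> p \<Longrightarrow> \<exists>x'. (l, x') \<in> q \<and> h x' = h x"
  by (metis Tmap_mem Tmap_memE)

lemma Tmap_Un: "Tmap f (A \<union> B) = Tmap f A \<union> Tmap f B"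
  by (simp add: Tmap_def image_Un)
lemma Tmap_family: "Tmap f {(l a, y a) | a. True} = {(l a, f (y a)) | a. True}"
  unfolding Tmap_def by auto
section \<open>Bisimilarity for labelled-transition coalgebras\<close>

coinductive bisimilar :: "('x \<Rightarrow> ('l \<times> 'x) set) \<Rightarrow> 'x \<Rightarrow> 'x \<Rightarrow> bool" for g where
  "(\<forall>p \<in> g x. \<exists>y'. (fst p, y') \<in> g x' \<and> bisimilar g (snd p) y') \<Longrightarrow>
   (\<forall>p' \<in> g x'. \<exists>y. (fst p', y) \<in> g x \<and> bisimilar g y (snd p')) \<Longrightarrow>
   bisimilar g x x'"

lemma bisimilarD1:
  assumes "bisimilar g x x'" "(l, y) \<in> g x"
  shows "\<exists>y'. (l, y') \<in> g x' \<and> bisimilar g y y'"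
proof -
  have "\<forall>p \<in> g x. \<exists>y'. (fst p, y') \<in> g x' \<and> bisimilar g (snd p) y'"
    using assms(1) by (cases rule: bisimilar.cases) simp
  from bspec[OF this assms(2)] show ?thesis by simp
qed

lemma bisimilarD2:
  assumes "bisimilar g x x'" "(l, y') \<in> g x'"
  shows "\<exists>y. (l, y) \<in> g x \<and> bisimilar g y y'"
proof -
  have "\<forall>p' \<in> g x'. \<exists>y. (fst p', y) \<in> g x \<and> bisimilar g y (snd p')"
    using assms(1) by (cases rule: bisimilar.cases) simp
  from bspec[OF this assms(2)] show ?thesis by simp
qed

lemma symmetric_simulation_bisimilar:
  assumes "R x x'"
    and sym: "\<And>x x'. R x x' \<Longrightarrow> R x' x"
    and sim: "\<And>x x' l y. R x x' \<Longrightarrow> (l, y) \<in> g x \<Longrightarrow> \<exists>y'. (l, y') \<in> g x' \<and> R y y'"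
  shows "bisimilar g x x'"
proof (rule bisimilar.coinduct[where X = R, OF assms(1)])
  fix x x' assume R: "R x x'"
  have fwd: "\<forall>p \<in> g x. \<exists>y'. (fst p, y') \<in> g x' \<and> (R (snd p) y' \<or> bisimilar g (snd p) y')"
  proof
    fix p assume "p \<in> g x"
    then show "\<exists>y'. (fst p, y') \<in> g x' \<and> (R (snd p) y' \<or> bisimilar g (snd p) y')"
      using sim[OF R, of "fst p" "snd p"] by auto
  qed
  have bwd: "\<forall>p \<in> g x'. \<exists>y. (fst p, y) \<in> g x \<and> (R y (snd p) \<or> bisimilar g y (snd p))"
  proof
    fix p assume "p \<in> g x'"
    then obtain y where "(fst p, y) \<in> g x" "R (snd p) y"
      using sim[OF sym[OF R], of "fst p" "snd p"] by auto
    then show "\<exists>y. (fst p, y) \<in> g x \<and> (R y (snd p) \<or> bisimilar g y (snd p))"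
      using sym by blast
  qed
  show "\<exists>x1 x1'. x = x1 \<and> x' = x1' \<and>
      (\<forall>p \<in> g x1. \<exists>y'. (fst p, y') \<in> g x1' \<and> (R (snd p) y' \<or> bisimilar g (snd p) y')) \<and>
      (\<forall>p \<in> g x1'. \<exists>y. (fst p, y) \<in> g x1 \<and> (R y (snd p) \<or> bisimilar g y (snd p)))"
    using fwd bwd by blast
qed

lemma bisimilar_refl: "bisimilar g x x"
  by (rule symmetric_simulation_bisimilar[where R = "(=)"]) auto

lemma bisimilar_sym: "bisimilar g x x' \<Longrightarrow> bisimilar g x' x"
  by (rule symmetric_simulation_bisimilar[where R = "\<lambda>x x'. bisimilar g x' x \<or> bisimilar g x x'"])
    (auto dest: bisimilarD1 bisimilarD2)

lemma bisimilar_trans: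
  assumes "bisimilar g x y" "bisimilar g y z"
  shows "bisimilar g x z"
proof (rule symmetric_simulation_bisimilar[where R = "\<lambda>x z. \<exists>y. bisimilar g x y \<and> bisimilar g y z"])
  show "\<exists>y. bisimilar g x y \<and> bisimilar g y z" using assms by blast
next
  fix x z assume "\<exists>y. bisimilar g x y \<and> bisimilar g y z"
  then show "\<exists>y. bisimilar g z y \<and> bisimilar g y x" by (blast intro: bisimilar_sym)
next
  fix x z l x1 assume "\<exists>y. bisimilar g x y \<and> bisimilar g y z" "(l, x1) \<in> g x"
  then show "\<exists>z1. (l, z1) \<in> g z \<and> (\<exists>y. bisimilar g x1 y \<and> bisimilar g y z1)"
    by (meson bisimilarD1)
qed

lemma kernel_bisimilar:
  assumes hom: "coalg_hom UNIV g Y g' h" and "h x = h x'"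
  shows "bisimilar g x x'"
proof (rule symmetric_simulation_bisimilar[where R = "\<lambda>x x'. h x = h x'"])
  fix x x' l y assume eq: "h x = h x'" and y: "(l, y) \<in> g x"
  have "g' (h z) = Tmap h (g z)" for z using hom by (simp add: coalg_hom_def)
  then have "Tmap h (g x) = Tmap h (g x')" using eq by metis
  then show "\<exists>y'. (l, y') \<in> g x' \<and> h y = h y'"
    using Tmap_eq_match y by metis
qed (use assms in auto)

definition bisim_rep :: "('x \<Rightarrow> ('l \<times> 'x) set) \<Rightarrow> 'x \<Rightarrow> 'x" where
  "bisim_rep g x = (SOME z. bisimilar g z x)"

lemma bisimilar_rep: "bisimilar g (bisim_rep g x) x"
  unfolding bisim_rep_def by (rule someI[of _ x]) (rule bisimilar_refl)

lemma bisim_rep_eq_iff: "bisim_rep g x = bisim_rep g x' \<longleftrightarrow> bisimilar g x x'"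
proof
  assume "bisim_rep g x = bisim_rep g x'"
  then show "bisimilar g x x'"
    by (metis bisimilar_rep bisimilar_sym bisimilar_trans)
next
  assume "bisimilar g x x'"
  then have "(\<lambda>z. bisimilar g z x) = (\<lambda>z. bisimilar g z x')"
    by (blast intro: bisimilar_trans bisimilar_sym)
  then show "bisim_rep g x = bisim_rep g x'" unfolding bisim_rep_def by simp
qed

lemma Tmap_bisim_rep:
  assumes "bisimilar g x x'"
  shows "Tmap (f \<circ> bisim_rep g) (g x) = Tmap (f \<circ> bisim_rep g) (g x')"
proof -
  have sub: "Tmap (f \<circ> bisim_rep g) (g x) \<subseteq> Tmap (f \<circ> bisim_rep g) (g x')"
    if bis: "bisimilar g x x'" for x x'
  proof
    fix p assume "p \<in> Tmap (f \<circ> bisim_rep g) (g x)"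
    then obtain l y where p: "p = (l, f (bisim_rep g y))" "(l, y) \<in> g x"
      unfolding Tmap_def by auto
    then obtain y' where y': "(l, y') \<in> g x'" "bisimilar g y y'" using bisimilarD1[OF bis] by blast
    then have "bisim_rep g y = bisim_rep g y'" by (simp only: bisim_rep_eq_iff)
    then show "p \<in> Tmap (f \<circ> bisim_rep g) (g x')"
      using p(1) Tmap_mem[OF y'(1), of "f \<circ> bisim_rep g"] by simp
  qed
  show ?thesis using sub[OF assms] sub[OF bisimilar_sym[OF assms]] by blast
qed

lemma bisimilarity_quotient:
  fixes h :: "'x \<Rightarrow> 'y"
  assumes epi: "coalg_epi UNIV g Y g' h"
  shows "\<exists>(Y' :: 'y set) g'' k. coalg Y' g'' \<and> coalg_epi Y g' Y' g'' k \<and> coalg_epi UNIV g Y' g'' (k \<circ> h)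
           \<and> (\<forall>x x'. (k \<circ> h) x = (k \<circ> h) x' \<longleftrightarrow> bisimilar g x x')"
proof -
  let ?c = "bisim_rep g"
  have hom: "coalg_hom UNIV g Y g' h" and hY: "range h = Y"
    using epi unfolding coalg_epi_def by auto
  have gh: "g' (h x) = Tmap h (g x)" for x using hom unfolding coalg_hom_def by blast
  define k where "k y = h (?c (inv_into UNIV h y))" for y
  have kh: "k (h x) = h (?c x)" for x
  proof -
    have "bisimilar g (inv_into UNIV h (h x)) x"
      by (rule kernel_bisimilar[OF hom]) (simp add: f_inv_into_f)
    then have "?c (inv_into UNIV h (h x)) = ?c x" by (simp only: bisim_rep_eq_iff)
    then show ?thesis by (simp add: k_def)
  qed
  have ker: "k (h x) = k (h x') \<longleftrightarrow> bisimilar g x x'" for x x'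
  proof
    assume "k (h x) = k (h x')"
    then have "bisimilar g (?c x) (?c x')" using kernel_bisimilar[OF hom] by (simp add: kh)
    then show "bisimilar g x x'" by (meson bisimilar_rep bisimilar_sym bisimilar_trans)
  next
    assume "bisimilar g x x'"
    then have "?c x = ?c x'" by (simp only: bisim_rep_eq_iff)
    then show "k (h x) = k (h x')" by (simp add: kh)
  qed
  define Y' where "Y' = k ` Y"
  define g'' where "g'' y = Tmap k (g' y)" for y
  have g''_kh: "g'' (k (h x)) = Tmap (k \<circ> h) (g x)" for x
  proof -
    have "g'' (k (h x)) = Tmap (k \<circ> h) (g (?c x))"
      by (simp add: g''_def kh gh Tmap_comp)
    also have "\<dots> = Tmap (h \<circ> ?c) (g (?c x))" by (simp add: kh comp_def)
    also have "\<dots> = Tmap (h \<circ> ?c) (g x)" by (rule Tmap_bisim_rep[OF bisimilar_rep])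
    also have "\<dots> = Tmap (k \<circ> h) (g x)" by (simp add: kh comp_def)
    finally show ?thesis .
  qed
  have Y': "Y' = range (k \<circ> h)" unfolding Y'_def hY[symmetric] by (simp add: image_comp)
  have "coalg Y' g''"
    unfolding coalg_def Y' by (auto simp: g''_kh Tmap_def)
  moreover have "coalg_epi Y g' Y' g'' k"
    unfolding coalg_epi_def coalg_hom_def Y'_def hY[symmetric] by (auto simp: g''_kh gh Tmap_comp)
  moreover have "coalg_epi UNIV g Y' g'' (k \<circ> h)"
    unfolding coalg_epi_def coalg_hom_def Y' by (auto simp: g''_kh)
  moreover have "\<forall>x x'. (k \<circ> h) x = (k \<circ> h) x' \<longleftrightarrow> bisimilar g x x'"
    using ker by simp
  ultimately show ?thesis by blast
qed

section \<open>A syntax-directed transition relation for CCS\<close>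

text \<open>Complementary action; the synchronisation rule below is symmetric in the two components.\<close>
fun co :: "'c pre \<Rightarrow> 'c pre" where
  "co Tau = Tau" | "co (In c) = Out c" | "co (Out c) = In c"

lemma co_co [simp]: "co (co a) = a" by (cases a) auto
lemma fn_pre_co [simp]: "fn_pre (co a) = fn_pre a" by (cases a) auto
lemma co_Tau_iff [simp]: "co a = Tau \<longleftrightarrow> a = Tau" by (cases a) auto

text \<open>It agrees with the given LTS up to structural congruence
  (step_iff below) and, unlike it, admits inversion.\<close>
inductive sstep :: "'c proc \<Rightarrow> 'c pre \<Rightarrow> 'c proc \<Rightarrow> bool" where
  pre: "sstep (Sum (add_mset (\<alpha>, P) M)) \<alpha> P"
| res: "a \<notin> fn_pre \<alpha> \<Longrightarrow> sstep P \<alpha> P' \<Longrightarrow> sstep (Res a P) \<alpha> (Res a P')"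
| parl: "sstep P \<alpha> P' \<Longrightarrow> sstep (Par P Q) \<alpha> (Par P' Q)"
| parr: "sstep Q \<alpha> Q' \<Longrightarrow> sstep (Par P Q) \<alpha> (Par P Q')"
| syn: "sstep P \<alpha> P' \<Longrightarrow> sstep Q (co \<alpha>) Q' \<Longrightarrow> \<alpha> \<noteq> Tau \<Longrightarrow> sstep (Par P Q) Tau (Par P' Q')"

inductive_cases sstep_SumE: "sstep (Sum M) \<alpha> X"

lemma sstep_ParE:
  assumes "sstep (Par P Q) \<alpha> X"
  obtains (left) P1 where "X = Par P1 Q" "sstep P \<alpha> P1"
  | (right) Q1 where "X = Par P Q1" "sstep Q \<alpha> Q1"
  | (sync) \<beta> P1 Q1 where "\<alpha> = Tau" "\<beta> \<noteq> Tau" "X = Par P1 Q1" "sstep P \<beta> P1" "sstep Q (co \<beta>) Q1"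
  using assms by (cases rule: sstep.cases) auto

lemma sstep_ResE:
  assumes "sstep (Res a P) \<alpha> X"
  obtains P1 where "X = Res a P1" "a \<notin> fn_pre \<alpha>" "sstep P \<alpha> P1"
  using assms by (cases rule: sstep.cases) auto

lemma sstep_nil [simp]: "\<not> sstep nil \<alpha> X"
  unfolding nil_def by (auto elim: sstep_SumE)

lemma fn_sstep: "sstep P \<alpha> P' \<Longrightarrow> fn P' \<subseteq> fn P \<and> fn_pre \<alpha> \<subseteq> fn P"
  by (induction rule: sstep.induct) auto

lemma swap_name_inv [simp]: "swap_name a b (swap_name a b c) = c"
  by (auto simp: swap_name_def)

lemma swap_name_inj [simp]: "swap_name a b c = swap_name a b d \<longleftrightarrow> c = d"
  by (auto simp: swap_name_def)

lemma swap_pre_inv [simp]: "swap_pre a b (swap_pre a b x) = x"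
  by (cases x) auto

lemma fn_swap_pre: "fn_pre (swap_pre a b x) = swap_name a b ` fn_pre x"
  by (cases x) auto

lemma swap_pre_co: "swap_pre a b (co x) = co (swap_pre a b x)"
  by (cases x) auto

lemma swap_pre_Tau_iff [simp]: "swap_pre a b x = Tau \<longleftrightarrow> x = Tau"
  by (cases x) auto

lemma swap_pre_id: "a \<notin> fn_pre x \<Longrightarrow> b \<notin> fn_pre x \<Longrightarrow> swap_pre a b x = x"
  by (cases x) (auto simp: swap_name_def)

lemma fn_pswap: "fn (pswap a b P) = swap_name a b ` fn P"
proof (induction P)
  case (Sum M)
  then show ?case
    by (auto simp: fn_swap_pre image_iff) force+
qed auto

lemma pswap_inv [simp]: "pswap a b (pswap a b P) = P"
proof (induction P)
  case (Sum M)
  then show ?case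
    by (simp add: multiset.map_comp) (rule multiset.map_ident_strong, auto)
qed auto

lemma sstep_pswap: "sstep P \<alpha> P' \<Longrightarrow> sstep (pswap a b P) (swap_pre a b \<alpha>) (pswap a b P')"
proof (induction rule: sstep.induct)
  case (res c \<alpha> P P')
  then show ?case by (auto intro!: sstep.res simp: fn_swap_pre)
next
  case (syn P \<alpha> P' Q Q')
  then show ?case by (auto intro!: sstep.syn simp: swap_pre_co)
qed (auto intro: sstep.intros)

section \<open>Harmony: structural congruence preserves syntax-directed transitions\<close>

definition sc_sim :: "'c proc \<Rightarrow> 'c proc \<Rightarrow> bool" where
  "sc_sim P Q \<longleftrightarrow> (\<forall>\<alpha> P'. sstep P \<alpha> P' \<longrightarrow> (\<exists>Q'. sstep Q \<alpha> Q' \<and> P' \<equiv>\<^sub>s Q'))"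

lemma sc_simI:
  "(\<And>\<alpha> P'. sstep P \<alpha> P' \<Longrightarrow> \<exists>Q'. sstep Q \<alpha> Q' \<and> P' \<equiv>\<^sub>s Q') \<Longrightarrow> sc_sim P Q"
  unfolding sc_sim_def by blast

lemma sc_simD: "sc_sim P Q \<Longrightarrow> sstep P \<alpha> P' \<Longrightarrow> \<exists>Q'. sstep Q \<alpha> Q' \<and> P' \<equiv>\<^sub>s Q'"
  unfolding sc_sim_def by blast

lemma sc_sim_refl: "sc_sim P P"
  by (blast intro: sc_simI scong.refl)

lemma sc_sim_trans:
  assumes "sc_sim P Q" "sc_sim Q R"
  shows "sc_sim P R"
proof (rule sc_simI)
  fix \<alpha> P' assume "sstep P \<alpha> P'"
  then show "\<exists>R'. sstep R \<alpha> R' \<and> P' \<equiv>\<^sub>s R'"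
    using assms by (meson sc_simD scong.trans)
qed

lemma sc_sim_sum_cong:
  assumes "P \<equiv>\<^sub>s P'"
  shows "sc_sim (Sum (add_mset (\<alpha>, P) M)) (Sum (add_mset (\<alpha>, P') M))"
proof (rule sc_simI)
  fix \<beta> X assume "sstep (Sum (add_mset (\<alpha>, P) M)) \<beta> X"
  then obtain N where N: "add_mset (\<alpha>, P) M = add_mset (\<beta>, X) N"
    by (auto elim: sstep_SumE)
  show "\<exists>Q'. sstep (Sum (add_mset (\<alpha>, P') M)) \<beta> Q' \<and> X \<equiv>\<^sub>s Q'"
  proof (cases "(\<alpha>, P) = (\<beta>, X)")
    case True
    then show ?thesis using assms by (auto intro: sstep.pre)
  next
    case False
    then obtain M' where "M = add_mset (\<beta>, X) M'"
      using N by (metis insert_noteq_member mset_add)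
    then have "add_mset (\<alpha>, P') M = add_mset (\<beta>, X) (add_mset (\<alpha>, P') M')" by simp
    then show ?thesis by (metis sstep.pre scong.refl)
  qed
qed

lemma sc_sim_par_cong:
  assumes P: "sc_sim P P'" "P \<equiv>\<^sub>s P'" and Q: "sc_sim Q Q'" "Q \<equiv>\<^sub>s Q'"
  shows "sc_sim (Par P Q) (Par P' Q')"
proof (rule sc_simI)
  fix \<alpha> X assume "sstep (Par P Q) \<alpha> X"
  then show "\<exists>Y. sstep (Par P' Q') \<alpha> Y \<and> X \<equiv>\<^sub>s Y"
  proof (cases rule: sstep_ParE)
    case (left P1)
    then obtain P1' where "sstep P' \<alpha> P1'" "P1 \<equiv>\<^sub>s P1'" using sc_simD[OF P(1)] by blast
    then show ?thesis using left Q(2) by (blast intro: sstep.parl scong.par_cong)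
  next
    case (right Q1)
    then obtain Q1' where "sstep Q' \<alpha> Q1'" "Q1 \<equiv>\<^sub>s Q1'" using sc_simD[OF Q(1)] by blast
    then show ?thesis using right P(2) by (blast intro: sstep.parr scong.par_cong)
  next
    case (sync \<beta> P1 Q1)
    then obtain P1' Q1' where "sstep P' \<beta> P1'" "P1 \<equiv>\<^sub>s P1'" "sstep Q' (co \<beta>) Q1'" "Q1 \<equiv>\<^sub>s Q1'"
      using sc_simD[OF P(1)] sc_simD[OF Q(1)] by meson
    then show ?thesis using sync by (blast intro: sstep.syn scong.par_cong)
  qed
qed

lemma sc_sim_res_cong:
  assumes "sc_sim P P'"
  shows "sc_sim (Res a P) (Res a P')"
proof (rule sc_simI)
  fix \<alpha> X assume "sstep (Res a P) \<alpha> X"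
  then obtain P1 where X: "X = Res a P1" "a \<notin> fn_pre \<alpha>" "sstep P \<alpha> P1"
    by (elim sstep_ResE)
  then obtain P1' where "sstep P' \<alpha> P1'" "P1 \<equiv>\<^sub>s P1'" using sc_simD[OF assms] by blast
  then show "\<exists>Y. sstep (Res a P') \<alpha> Y \<and> X \<equiv>\<^sub>s Y"
    using X by (blast intro: sstep.res scong.res_cong)
qed

text \<open>Swapping is symmetric in the two names, which reduces the converse of
  alpha-conversion to alpha-conversion itself.\<close>
lemma swap_name_commute: "swap_name b a = swap_name a b"
  by (auto simp: swap_name_def fun_eq_iff)

lemma pswap_commute: "pswap b a P = pswap a b P"
proof -
  have "swap_pre b a = swap_pre a b"
  proof
    fix x show "swap_pre b a x = swap_pre a b x" by (cases x) (simp_all add: swap_name_commute)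
  qed
  then show ?thesis
  proof (induction P)
    case (Sum M)
    then show ?case
      by (auto simp: \<open>swap_pre b a = swap_pre a b\<close> intro!: multiset.map_cong split: prod.splits)
  qed (simp_all add: swap_name_commute)
qed

lemma sc_sim_alpha:
  assumes fresh: "b \<notin> fn (Res a P)"
  shows "sc_sim (Res a P) (Res b (pswap a b P))"
proof (rule sc_simI)
  fix \<alpha> X assume "sstep (Res a P) \<alpha> X"
  then obtain P1 where X: "X = Res a P1" "a \<notin> fn_pre \<alpha>" "sstep P \<alpha> P1"
    by (elim sstep_ResE)
  have fn_P1: "fn P1 \<subseteq> fn P" "fn_pre \<alpha> \<subseteq> fn P" using fn_sstep[OF X(3)] by auto
  have b_\<alpha>: "b \<notin> fn_pre \<alpha>" using fn_P1 fresh X(2) by auto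
  have "sstep (pswap a b P) \<alpha> (pswap a b P1)"
    using sstep_pswap[OF X(3), of a b] swap_pre_id[OF X(2) b_\<alpha>] by simp
  then have "sstep (Res b (pswap a b P)) \<alpha> (Res b (pswap a b P1))"
    by (rule sstep.res[OF b_\<alpha>])
  moreover have "X \<equiv>\<^sub>s Res b (pswap a b P1)"
    using X fn_P1 fresh by (auto intro!: scong.alpha)
  ultimately show "\<exists>Y. sstep (Res b (pswap a b P)) \<alpha> Y \<and> X \<equiv>\<^sub>s Y" by blast
qed

lemma alpha_fresh_back:
  assumes "b \<notin> fn (Res a P)"
  shows "a \<notin> fn (Res b (pswap a b P))"
  using assms by (auto simp: fn_pswap swap_name_def)

lemma sc_sim_alpha_rev:
  assumes "b \<notin> fn (Res a P)"
  shows "sc_sim (Res b (pswap a b P)) (Res a P)"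
  using sc_sim_alpha[OF alpha_fresh_back[OF assms]] by (simp add: pswap_commute)

lemma sc_sim_scope:
  assumes a_Q: "a \<notin> fn Q"
  shows "sc_sim (Res a (Par P Q)) (Par (Res a P) Q)"
proof (rule sc_simI)
  fix \<alpha> X assume "sstep (Res a (Par P Q)) \<alpha> X"
  then obtain Y where X: "X = Res a Y" "a \<notin> fn_pre \<alpha>" "sstep (Par P Q) \<alpha> Y"
    by (elim sstep_ResE)
  from X(3) show "\<exists>Z. sstep (Par (Res a P) Q) \<alpha> Z \<and> X \<equiv>\<^sub>s Z"
  proof (cases rule: sstep_ParE)
    case (left P1)
    then show ?thesis using X a_Q by (blast intro: sstep.intros scong.intros)
  next
    case (right Q1)
    then have "a \<notin> fn Q1" using fn_sstep[OF right(2)] a_Q by auto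
    then show ?thesis using right X by (blast intro: sstep.intros scong.intros)
  next
    case (sync \<beta> P1 Q1)
    have "a \<notin> fn Q1" "a \<notin> fn_pre \<beta>" using fn_sstep[OF sync(5)] a_Q by auto
    then show ?thesis using sync X by (blast intro: sstep.intros scong.intros)
  qed
qed

lemma sc_sim_scope_rev:
  assumes a_Q: "a \<notin> fn Q"
  shows "sc_sim (Par (Res a P) Q) (Res a (Par P Q))"
proof (rule sc_simI)
  fix \<alpha> X assume "sstep (Par (Res a P) Q) \<alpha> X"
  then show "\<exists>Z. sstep (Res a (Par P Q)) \<alpha> Z \<and> X \<equiv>\<^sub>s Z"
  proof (cases rule: sstep_ParE)
    case (left P1)
    then obtain P2 where "P1 = Res a P2" "a \<notin> fn_pre \<alpha>" "sstep P \<alpha> P2"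
      by (elim sstep_ResE)
    then show ?thesis using left a_Q by (blast intro: sstep.intros scong.intros)
  next
    case (right Q1)
    then have "a \<notin> fn Q1" "a \<notin> fn_pre \<alpha>" using fn_sstep[OF right(2)] a_Q by auto
    then show ?thesis using right by (blast intro: sstep.intros scong.intros)
  next
    case (sync \<beta> P1 Q1)
    then obtain P2 where P2: "P1 = Res a P2" "a \<notin> fn_pre \<beta>" "sstep P \<beta> P2"
      by (elim sstep_ResE)
    have "a \<notin> fn Q1" using fn_sstep[OF sync(5)] a_Q by auto
    have "sstep (Res a (Par P Q)) Tau (Res a (Par P2 Q1))"
      using sync P2 by (auto intro!: sstep.res sstep.syn)
    moreover have "X \<equiv>\<^sub>s Res a (Par P2 Q1)"
      using sync P2 \<open>a \<notin> fn Q1\<close> by (auto intro: scong.scope scong.sym)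
    ultimately show ?thesis using sync by blast
  qed
qed

lemma harmony: "P \<equiv>\<^sub>s Q \<Longrightarrow> sc_sim P Q \<and> sc_sim Q P"
proof (induction rule: scong.induct)
  case (trans P Q R) then show ?case by (blast intro: sc_sim_trans)
next
  case (sum_cong P P' \<alpha> M) then show ?case by (blast intro: sc_sim_sum_cong scong.sym)
next
  case (par_cong P P' Q Q') then show ?case by (blast intro: sc_sim_par_cong scong.sym)
next
  case (res_cong P P' a) then show ?case by (blast intro: sc_sim_res_cong)
next
  case (alpha b a P) then show ?case by (blast intro: sc_sim_alpha sc_sim_alpha_rev)
next
  case (scope a Q P) then show ?case by (blast intro: sc_sim_scope sc_sim_scope_rev)
next
  case (par_comm P Q)
  show ?case unfolding sc_sim_def
    by (auto elim!: sstep_ParE intro: sstep.intros scong.intros)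
      (metis co_co co_Tau_iff sstep.syn scong.par_comm)+
qed (auto simp: sc_sim_refl sc_sim_def elim!: sstep_ParE sstep_ResE intro: sstep.intros scong.intros)

lemma sstep_step: "sstep P \<alpha> P' \<Longrightarrow> step P \<alpha> P'"
proof (induction rule: sstep.induct)
  case (parr Q \<alpha> Q' P)
  have "step (Par Q P) \<alpha> (Par Q' P)" by (rule step.par[OF parr.IH])
  then show ?case by (rule step.str[OF scong.par_comm scong.par_comm])
next
  case (syn P \<alpha> P' Q Q')
  show ?case
  proof (cases \<alpha>)
    case Tau then show ?thesis using syn by simp
  next
    case (In c)
    then have "step (Par Q P) Tau (Par Q' P')" using syn by (auto intro: step.syn)
    then show ?thesis by (rule step.str[OF scong.par_comm scong.par_comm])
  next
    case (Out c)
    then show ?thesis using syn by (auto intro: step.syn)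
  qed
qed (auto intro: step.intros)

lemma step_sstep: "step P \<alpha> P' \<Longrightarrow> \<exists>Q. sstep P \<alpha> Q \<and> Q \<equiv>\<^sub>s P'"
proof (induction rule: step.induct)
  case (pre \<alpha> P M) then show ?case by (blast intro: sstep.pre scong.refl)
next
  case (res a \<alpha> P P') then show ?case by (blast intro: sstep.res scong.res_cong)
next
  case (par P \<alpha> P' Q) then show ?case by (blast intro: sstep.parl scong.par_cong scong.refl)
next
  case (syn P c P' Q Q')
  then obtain P0 Q0 where "sstep P (Out c) P0" "P0 \<equiv>\<^sub>s P'" "sstep Q (In c) Q0" "Q0 \<equiv>\<^sub>s Q'"
    by blast
  then show ?case by (intro exI[of _ "Par P0 Q0"]) (auto intro: sstep.syn scong.par_cong)
next
  case (str P Q P' Q' \<alpha>)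
  then obtain R where R: "sstep P \<alpha> R" "R \<equiv>\<^sub>s P'" by blast
  obtain S where "sstep Q \<alpha> S" "R \<equiv>\<^sub>s S" using harmony[OF str(1)] R(1) by (meson sc_simD)
  then show ?case using R(2) str(2) by (meson scong.sym scong.trans)
qed

lemma step_iff: "step P \<alpha> P' \<longleftrightarrow> (\<exists>Q. sstep P \<alpha> Q \<and> Q \<equiv>\<^sub>s P')"
  using step_sstep step.str[OF scong.refl _ sstep_step] by blast

lemma step_parr: "step Q \<alpha> Q1 \<Longrightarrow> step (Par P Q) \<alpha> (Par P Q1)"
  unfolding step_iff by (blast intro: sstep.parr scong.par_cong scong.refl)

lemma step_syn:
  "step P \<beta> P1 \<Longrightarrow> step Q (co \<beta>) Q1 \<Longrightarrow> \<beta> \<noteq> Tau \<Longrightarrow> step (Par P Q) Tau (Par P1 Q1)"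
  unfolding step_iff by (blast intro: sstep.syn scong.par_cong)

lemma step_ParE:
  assumes "step (Par P Q) \<alpha> R"
  obtains (left) P1 where "step P \<alpha> P1" "Par P1 Q \<equiv>\<^sub>s R"
  | (right) Q1 where "step Q \<alpha> Q1" "Par P Q1 \<equiv>\<^sub>s R"
  | (sync) \<beta> P1 Q1 where "\<alpha> = Tau" "\<beta> \<noteq> Tau" "step P \<beta> P1" "step Q (co \<beta>) Q1"
      "Par P1 Q1 \<equiv>\<^sub>s R"
proof -
  obtain S where S: "sstep (Par P Q) \<alpha> S" "S \<equiv>\<^sub>s R" using step_sstep[OF assms] by blast
  from S(1) show thesis
  proof (cases rule: sstep_ParE)
    case (left P1) then show thesis using S(2) that(1) sstep_step by blast
  next
    case (right Q1) then show thesis using S(2) that(2) sstep_step by blast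
  next
    case (sync \<beta> P1 Q1) then show thesis using S(2) that(3) sstep_step by blast
  qed
qed

section \<open>Strong bisimilarity of CCS is a congruence for parallel composition\<close>

lemma ccs_g_iff [simp]: "(\<alpha>, Y) \<in> ccs_g X \<longleftrightarrow> step X \<alpha> Y"
  by (simp add: ccs_g_def)

lemma step_scong: "P \<equiv>\<^sub>s Q \<Longrightarrow> step P \<alpha> R \<Longrightarrow> step Q \<alpha> R"
  by (rule step.str[OF _ scong.refl])

abbreviation ccs_bisim :: "('c::countable) proc \<Rightarrow> 'c proc \<Rightarrow> bool" (infix "\<sim>" 50) where
  "P \<sim> Q \<equiv> bisimilar ccs_g P Q"

definition par_related :: "('c::countable) proc \<Rightarrow> 'c proc \<Rightarrow> bool" where
  "par_related A B \<longleftrightarrow>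
     (\<exists>P Q P' Q'. P \<sim> P' \<and> Q \<sim> Q' \<and> A \<equiv>\<^sub>s Par P Q \<and> B \<equiv>\<^sub>s Par P' Q')"

lemma par_related_sim:
  assumes rel: "par_related A B" and "step A \<alpha> A'"
  shows "\<exists>B'. step B \<alpha> B' \<and> par_related A' B'"
proof -
  obtain P Q P' Q' where PQ: "P \<sim> P'" "Q \<sim> Q'" and A: "A \<equiv>\<^sub>s Par P Q" and B: "B \<equiv>\<^sub>s Par P' Q'"
    using rel unfolding par_related_def by blast
  have to_B: "step (Par P' Q') \<beta> X \<Longrightarrow> step B \<beta> X" for \<beta> X
    by (rule step_scong[OF scong.sym[OF B]])
  have related: "par_related A' (Par P1' Q1')"
    if "Par P1 Q1 \<equiv>\<^sub>s A'" "P1 \<sim> P1'" "Q1 \<sim> Q1'" for P1 Q1 P1' Q1'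
    unfolding par_related_def using that by (blast intro: scong.sym scong.refl)
  from step_scong[OF A \<open>step A \<alpha> A'\<close>] show ?thesis
  proof (cases rule: step_ParE)
    case (left P1)
    then obtain P1' where "step P' \<alpha> P1'" "P1 \<sim> P1'" using bisimilarD1[OF PQ(1)] by fastforce
    then show ?thesis using left PQ(2) to_B step.par related by blast
  next
    case (right Q1)
    then obtain Q1' where "step Q' \<alpha> Q1'" "Q1 \<sim> Q1'" using bisimilarD1[OF PQ(2)] by fastforce
    then show ?thesis using right PQ(1) to_B step_parr related by blast
  next
    case (sync \<beta> P1 Q1)
    then obtain P1' Q1' where "step P' \<beta> P1'" "P1 \<sim> P1'" "step Q' (co \<beta>) Q1'" "Q1 \<sim> Q1'"
      using bisimilarD1[OF PQ(1)] bisimilarD1[OF PQ(2)] by (metis ccs_g_iff)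
    then show ?thesis using sync to_B step_syn related by blast
  qed
qed

lemma bisim_par:
  assumes "P \<sim> P'" "Q \<sim> Q'"
  shows "Par P Q \<sim> Par P' Q'"
proof (rule symmetric_simulation_bisimilar[where R = par_related])
  show "par_related (Par P Q) (Par P' Q')"
    unfolding par_related_def using assms by (blast intro: scong.refl)
next
  fix A B assume "par_related A B"
  then show "par_related B A" unfolding par_related_def by (blast intro: bisimilar_sym)
next
  fix A B \<alpha> A' assume "par_related A B" "(\<alpha>, A') \<in> ccs_g A"
  then show "\<exists>B'. (\<alpha>, B') \<in> ccs_g B \<and> par_related A' B'" using par_related_sim by simp
qed

text \<open>Reflection into R_(X,g): compose with the quotient by bisimilarity.\<close>
lemma Rg_reflection:
  fixes h :: "('c::countable) proc \<Rightarrow> 'y"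
  assumes "coalg_epi UNIV ccs_g Y g' h"
  shows "\<exists>(Y' :: 'y set) g'' k. Rg_obj Y' g'' (k \<circ> h) \<and> coalg Y' g'' \<and> coalg_epi Y g' Y' g'' k"
proof -
  obtain Y' :: "'y set" and g'' k where quot: "coalg Y' g''" "coalg_epi Y g' Y' g'' k"
      "coalg_epi UNIV ccs_g Y' g'' (k \<circ> h)"
    and ker: "\<And>x x'. (k \<circ> h) x = (k \<circ> h) x' \<longleftrightarrow> x \<sim> x'"
    using bisimilarity_quotient[OF assms] by blast
  have "(k \<circ> h) (Par x y) = (k \<circ> h) (Par x' y')"
    if "(k \<circ> h) x = (k \<circ> h) x'" "(k \<circ> h) y = (k \<circ> h) y'" for x x' y y'
    using that bisim_par by (simp only: ker)
  then have "Rg_obj Y' g'' (k \<circ> h)" unfolding Rg_obj_def using quot by blast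
  then show ?thesis using quot by blast
qed

lemma Rg_identity: "Rg_obj UNIV ccs_g id"
  unfolding Rg_obj_def coalg_def coalg_epi_def coalg_hom_def Tmap_def by auto

text \<open>Invariance of \<delta>: matching labelled derivatives of equal T-images combine, via
  respect of parallel composition, to matching synchronisations.\<close>
lemma delta_image_subset:
  assumes par: "\<And>x x' y y'. h x = h x' \<Longrightarrow> h y = h y' \<Longrightarrow> h (Par x y) = h (Par x' y')"
    and eq: "Fmap (Tmap h) u = Fmap (Tmap h) v"
  shows "Bmap h (ccs_delta u) \<subseteq> Bmap h (ccs_delta v)"
proof
  fix z assume "z \<in> Bmap h (ccs_delta u)"
  then obtain x where x: "x \<in> ccs_delta u" "z = h x" unfolding Bmap_def by auto
  show "z \<in> Bmap h (ccs_delta v)"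
  proof (cases u)
    case (Inl p)
    then obtain q where v: "v = Inl q" "Tmap h p = Tmap h q"
      using eq by (cases v) (auto simp: Fmap_def)
    have "(Tau, x) \<in> p" using x Inl by simp
    then obtain x' where "(Tau, x') \<in> q" "h x' = h x" using Tmap_eq_match[OF v(2)] by blast
    then have "x' \<in> ccs_delta v" "h x' = z" using v x(2) by simp_all
    then show ?thesis unfolding Bmap_def by blast
  next
    case (Inr pp)
    then obtain p1 p2 q1 q2 where u: "u = Inr (p1, p2)" and v: "v = Inr (q1, q2)"
        and q1: "Tmap h p1 = Tmap h q1" and q2: "Tmap h p2 = Tmap h q2"
      using eq by (cases pp, cases v) (auto simp: Fmap_def)
    obtain x1 x2 \<alpha> \<beta> a where xs: "x = Par x1 x2" "(\<alpha>, x1) \<in> p1" "(\<beta>, x2) \<in> p2"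
        and co: "\<alpha> = In a \<and> \<beta> = Out a \<or> \<alpha> = Out a \<and> \<beta> = In a"
      using x(1) u by auto
    obtain x1' x2' where x': "(\<alpha>, x1') \<in> q1" "h x1' = h x1" "(\<beta>, x2') \<in> q2" "h x2' = h x2"
      using Tmap_eq_match[OF q1 xs(2)] Tmap_eq_match[OF q2 xs(3)] by blast
    have "Par x1' x2' \<in> ccs_delta v" using co v x'(1,3) by auto
    moreover have "h (Par x1' x2') = z" using par[OF x'(2,4)] x(2) xs(1) by simp
    ultimately show ?thesis unfolding Bmap_def by blast
  qed
qed

lemma delta_invariant:
  assumes "\<And>x x' y y'. h x = h x' \<Longrightarrow> h y = h y' \<Longrightarrow> h (Par x y) = h (Par x' y')"
    and "Fmap (Tmap h) u = Fmap (Tmap h) v"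
  shows "Bmap h (ccs_delta u) = Bmap h (ccs_delta v)"
  using delta_image_subset[OF assms] delta_image_subset[OF assms(1) assms(2)[symmetric]] by blast

lemma Tmap_Fmap_lambda:
  "Tmap (Fmap h) (ccs_lambda x) = {(Tau, Inl (h x))}
     \<union> {(In a, Inr (h x, h (pfx (Out a) nil))) | a. True}
     \<union> {(Out a, Inr (h x, h (pfx (In a) nil))) | a. True}"
  unfolding ccs_lambda_def Tmap_Un Tmap_family by (simp add: Tmap_def Fmap_def)

text \<open>\<mu> is natural, which makes it invariant for every h.\<close>
lemma Tmap_mu: "Tmap h (ccs_mu q) = ccs_mu (Tmap (Bmap h) q)"
  unfolding Tmap_def ccs_mu_def Bmap_def by force

theorem proposition5:
  shows
  \<comment> \<open>(1) R_(X,g) satisfies conditions (1) and (2)\<close>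
  "((\<forall>(Y :: 'y set) g' h. coalg Y g' \<and> coalg_epi UNIV (ccs_g :: ('c::countable) proc \<Rightarrow> _) Y g' h \<longrightarrow>
       (\<exists>(Y' :: 'y set) g'' k. Rg_obj Y' g'' (k \<circ> h) \<and> coalg Y' g'' \<and> coalg_epi Y g' Y' g'' k))
    \<and> Rg_obj (UNIV :: 'c proc set) ccs_g id)
  \<comment> \<open>(2) id is an invariant for (X,g) from F-bar to F-bar\<close>
   \<and> invariant (\<lambda>h :: 'c proc \<Rightarrow> 'y. \<exists>Y g'. Rg_obj Y g' h) (\<lambda>h. Fmap h) (\<lambda>h. Fmap h) id
  \<comment> \<open>(3) delta is an invariant for (X,g) from F o T-bar to B-bar\<close>
   \<and> invariant (\<lambda>h :: 'c proc \<Rightarrow> 'y. \<exists>Y g'. Rg_obj Y g' h) (\<lambda>h. Fmap (Tmap h)) (\<lambda>h. Bmap h) ccs_delta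
  \<comment> \<open>(4) lambda is an invariant for (X,f) from Id-bar to T o F-bar\<close>
   \<and> invariant (\<lambda>h :: 'c proc \<Rightarrow> 'y. \<exists>Y f'. Rf_obj Y f' h) (\<lambda>h. h) (\<lambda>h. Tmap (Fmap h)) ccs_lambda
  \<comment> \<open>(5) mu is an invariant for (X,f) from T o B-bar to T-bar\<close>
   \<and> invariant (\<lambda>h :: 'c proc \<Rightarrow> 'y. \<exists>Y f'. Rf_obj Y f' h) (\<lambda>h. Tmap (Bmap h)) (\<lambda>h. Tmap h) ccs_mu"
proof (intro conjI)
  show "\<forall>(Y :: 'y set) g' h. coalg Y g' \<and> coalg_epi UNIV (ccs_g :: 'c proc \<Rightarrow> _) Y g' h \<longrightarrow>
       (\<exists>(Y' :: 'y set) g'' k. Rg_obj Y' g'' (k \<circ> h) \<and> coalg Y' g'' \<and> coalg_epi Y g' Y' g'' k)"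
    by (blast intro: Rg_reflection)
  show "Rg_obj (UNIV :: 'c proc set) ccs_g id" by (rule Rg_identity)
  show "invariant (\<lambda>h :: 'c proc \<Rightarrow> 'y. \<exists>Y g'. Rg_obj Y g' h) (\<lambda>h. Fmap h) (\<lambda>h. Fmap h) id"
    unfolding invariant_def by simp
  show "invariant (\<lambda>h :: 'c proc \<Rightarrow> 'y. \<exists>Y g'. Rg_obj Y g' h) (\<lambda>h. Fmap (Tmap h)) (\<lambda>h. Bmap h) ccs_delta"
  proof (unfold invariant_def, intro allI impI)
    fix h :: "'c proc \<Rightarrow> 'y" and u v :: "('c pre \<times> 'c proc) set + _"
    assume "\<exists>Y g'. Rg_obj Y g' h" and eq: "Fmap (Tmap h) u = Fmap (Tmap h) v"
    then have "h (Par x y) = h (Par x' y')" if "h x = h x'" "h y = h y'" for x x' y y'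
      using that unfolding Rg_obj_def by blast
    then show "Bmap h (ccs_delta u) = Bmap h (ccs_delta v)" using delta_invariant eq by blast
  qed
  show "invariant (\<lambda>h :: 'c proc \<Rightarrow> 'y. \<exists>Y f'. Rf_obj Y f' h) (\<lambda>h. h) (\<lambda>h. Tmap (Fmap h)) ccs_lambda"
    unfolding invariant_def by (simp add: Tmap_Fmap_lambda)
  show "invariant (\<lambda>h :: 'c proc \<Rightarrow> 'y. \<exists>Y f'. Rf_obj Y f' h) (\<lambda>h. Tmap (Bmap h)) (\<lambda>h. Tmap h) ccs_mu"
    unfolding invariant_def by (simp add: Tmap_mu)
qed

end
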